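(* Let $G$ be a finitely generated virtually nilpotent group (i.e. $G$ has a nilpotent normal subgroup of finite index), and let $\Phi$ be a uniformly continuous action of $G$ on a metric space $\Omega$. Let $U,V\subset\Omega$. Assume that there exists an element $g\in G$ such that the homeomorphism $f_g=\Phi(g,\cdot)$ is topologically Anosov with respect to the pair $(U,V)$. Then the action $\Phi$ is topologically Anosov with respect to the pair $(U,V)$.
   Context: Let $(\Omega,\mathrm{dist})$ be a metric space; $B(\delta,x)=\{y:\mathrm{dist}(x,y)<\delta\}$ and $B(\delta,U)=\bigcup_{x\in U}B(\delta,x)$. An action of a group $G$ is a map $\Phi:G\times\Omega\to\Omega$ such that each $f_g=\Phi(g,\cdot)$ is a homeomorphism of $\Omega$, $\Phi(e,x)=x$, and $\Phi(g_1g_2,x)=\Phi(g_1,\Phi(g_2,x))$. For a finitely generated $G$, the action is uniformly continuous if for some finite symmetric generating set $S$ (symmetric: $s\in S\Rightarrow s^{-1}\in S$) all maps $f_s$, $s\in S$, are uniformly continuous. Fix a finite symmetric generating set $S$ of $G$. For $d>0$, a family $\{y_g\}_{g\in G}\subset\Omega$ is a $d$-pseudotrajectory if $\mathrm{dist}(y_{sg},f_s(y_g))<d$ for all $s\in S$, $g\in G$. A uniformly continuous action has the shadowing property on $V\subset\Omega$ if for every $\varepsilon>0$ there is $d>0$ such that for every $d$-pseudotrajectory $\{y_g\}$ with all $y_g\in V$ there is $x_e\in\Omega$ with $\mathrm{dist}(y_g,f_g(x_e))<\varepsilon$ for all $g\in G$ (this property does not depend on the choice of $S$). The action is expansive on $U\subset\Omega$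 if there is $\Delta>0$ such that whenever $x_1,x_2\in U$ satisfy $\Phi(g,x_1),\Phi(g,x_2)\in U$ and $\mathrm{dist}(\Phi(g,x_1),\Phi(g,x_2))<\Delta$ for all $g\in G$, then $x_1=x_2$. The action is topologically Anosov with respect to $(U,V)$ if (TA1) there is $\gamma>0$ with $B(\gamma,V)\subset U$, (TA2) it has the shadowing property on $V$, and (TA3) it is expansive on $U$. A homeomorphism $f$ of $\Omega$ is said to have any of these properties if the $\mathbb Z$-action $(k,x)\mapsto f^k(x)$ (with generating set $\{1,-1\}$) has it. *)

theory Defs
  imports "HOL-Analysis.Analysis" "HOL-Algebra.Algebra"
begin

primrec lower_central :: "('g, 'm) monoid_scheme \<Rightarrow> nat \<Rightarrow> 'g set" where
  "lower_central G 0 = carrier G"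
| "lower_central G (Suc n) =
     generate G (\<Union>x\<in>carrier G. \<Union>y\<in>lower_central G n.
                   {x \<otimes>\<^bsub>G\<^esub> y \<otimes>\<^bsub>G\<^esub> inv\<^bsub>G\<^esub> x \<otimes>\<^bsub>G\<^esub> inv\<^bsub>G\<^esub> y})"

definition nilpotent_group :: "('g, 'm) monoid_scheme \<Rightarrow> bool" where
  "nilpotent_group G \<longleftrightarrow> group G \<and> (\<exists>n. lower_central G n = {\<one>\<^bsub>G\<^esub>})"

definition virtually_nilpotent :: "('g, 'm) monoid_scheme \<Rightarrow> bool" where
  "virtually_nilpotent G \<longleftrightarrow> group G \<and>
     (\<exists>N. N \<lhd> G \<and> nilpotent_group (G\<lparr>carrier := N\<rparr>) \<and> finite (rcosets\<^bsub>G\<^esub> N))"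

definition finite_symmetric_generating :: "('g, 'm) monoid_scheme \<Rightarrow> 'g set \<Rightarrow> bool" where
  "finite_symmetric_generating G S \<longleftrightarrow> finite S \<and> S \<subseteq> carrier G \<and>
     (\<forall>s\<in>S. inv\<^bsub>G\<^esub> s \<in> S) \<and> generate G S = carrier G"

definition finitely_generated_group :: "('g, 'm) monoid_scheme \<Rightarrow> bool" where
  "finitely_generated_group G \<longleftrightarrow> (\<exists>S. finite S \<and> S \<subseteq> carrier G \<and> generate G S = carrier G)"

section \<open>Group actions on a metric space (the whole type 'b plays the role of \<Omega>)\<close>

definition is_action :: "('g, 'm) monoid_scheme \<Rightarrow> ('g \<Rightarrow> 'b::metric_space \<Rightarrow> 'b) \<Rightarrow> bool" where
  "is_action G \<Phi> \<longleftrightarrow>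
     (\<forall>g\<in>carrier G. \<exists>h. homeomorphism UNIV UNIV (\<Phi> g) h) \<and>
     (\<forall>x. \<Phi> \<one>\<^bsub>G\<^esub> x = x) \<and>
     (\<forall>g1\<in>carrier G. \<forall>g2\<in>carrier G. \<forall>x. \<Phi> (g1 \<otimes>\<^bsub>G\<^esub> g2) x = \<Phi> g1 (\<Phi> g2 x))"

definition uniformly_continuous_action ::
  "('g, 'm) monoid_scheme \<Rightarrow> ('g \<Rightarrow> 'b::metric_space \<Rightarrow> 'b) \<Rightarrow> bool" where
  "uniformly_continuous_action G \<Phi> \<longleftrightarrow> is_action G \<Phi> \<and>
     (\<exists>S. finite_symmetric_generating G S \<and> (\<forall>s\<in>S. uniformly_continuous_on UNIV (\<Phi> s)))"

definition pseudotrajectory ::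
  "('g, 'm) monoid_scheme \<Rightarrow> 'g set \<Rightarrow> ('g \<Rightarrow> 'b::metric_space \<Rightarrow> 'b) \<Rightarrow> real \<Rightarrow> ('g \<Rightarrow> 'b) \<Rightarrow> bool" where
  "pseudotrajectory G S \<Phi> d y \<longleftrightarrow>
     (\<forall>s\<in>S. \<forall>g\<in>carrier G. dist (y (s \<otimes>\<^bsub>G\<^esub> g)) (\<Phi> s (y g)) < d)"

definition shadowing_on ::
  "('g, 'm) monoid_scheme \<Rightarrow> 'g set \<Rightarrow> ('g \<Rightarrow> 'b::metric_space \<Rightarrow> 'b) \<Rightarrow> 'b set \<Rightarrow> bool" where
  "shadowing_on G S \<Phi> V \<longleftrightarrow>
     (\<forall>\<epsilon>>0. \<exists>d>0. \<forall>y. pseudotrajectory G S \<Phi> d y \<and> (\<forall>g\<in>carrier G. y g \<in> V) \<longrightarrow>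
        (\<exists>x. \<forall>g\<in>carrier G. dist (y g) (\<Phi> g x) < \<epsilon>))"

definition expansive_on ::
  "('g, 'm) monoid_scheme \<Rightarrow> ('g \<Rightarrow> 'b::metric_space \<Rightarrow> 'b) \<Rightarrow> 'b set \<Rightarrow> bool" where
  "expansive_on G \<Phi> U \<longleftrightarrow>
     (\<exists>\<Delta>>0. \<forall>x1\<in>U. \<forall>x2\<in>U.
        (\<forall>g\<in>carrier G. \<Phi> g x1 \<in> U \<and> \<Phi> g x2 \<in> U \<and> dist (\<Phi> g x1) (\<Phi> g x2) < \<Delta>) \<longrightarrow> x1 = x2)"

definition topologically_anosov ::
  "('g, 'm) monoid_scheme \<Rightarrow> 'g set \<Rightarrow> ('g \<Rightarrow> 'b::metric_space \<Rightarrow> 'b) \<Rightarrow> 'b set \<Rightarrow> 'b set \<Rightarrow> bool" where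
  "topologically_anosov G S \<Phi> U V \<longleftrightarrow>
     (\<exists>\<gamma>>0. (\<Union>x\<in>V. ball x \<gamma>) \<subseteq> U) \<and> shadowing_on G S \<Phi> V \<and> expansive_on G \<Phi> U"

definition zpow_fun :: "('b \<Rightarrow> 'b) \<Rightarrow> int \<Rightarrow> 'b \<Rightarrow> 'b" where
  "zpow_fun f k = (if 0 \<le> k then f ^^ nat k else inv_into UNIV f ^^ nat (- k))"

definition homeo_topologically_anosov :: "('b::metric_space \<Rightarrow> 'b) \<Rightarrow> 'b set \<Rightarrow> 'b set \<Rightarrow> bool" where
  "homeo_topologically_anosov f U V \<longleftrightarrow>
     topologically_anosov integer_group {1, -1} (zpow_fun f) U V"

end

theory Submission
  imports Defs
begin

text \<open>
  Let \<open>y\<close> be a fine pseudotrajectory of the action. For each \<open>h\<close>, the slice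
  \<open>k \<mapsto> y (g\<^sup>k h)\<close> is a pseudotrajectory of \<open>f\<^sub>g\<close>, so it is shadowed by a point
  \<open>\<xi> h\<close>, which is unique by expansivity of \<open>f\<^sub>g\<close>. The elements \<open>c\<close> with
  \<open>\<xi> (c h) = f\<^sub>c (\<xi> h)\<close> for all \<open>h\<close> form a subgroup \<open>K\<close>, and uniqueness shows that
  \<open>K\<close> contains every \<open>s\<close> such that each \<open>g\<^sup>k s\<close> lies in \<open>A g\<^sup>k K\<close> for a fixed
  finite set \<open>A\<close>: passing through one step \<open>a \<in> A\<close> costs only a small error.
  In a virtually nilpotent group such a finite \<open>A\<close> forces \<open>K = G\<close>. Indeed, if \<open>N\<close> is a
  nilpotent normal subgroup of finite index, then \<open>g\<^sup>m \<in> N\<close> for some \<open>m \<ge> 1\<close>, so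
  conjugation by \<open>g\<^sup>k\<close> acts on each layer of the lower central series of \<open>N\<close>
  periodically in \<open>k\<close>; the layers are generated by finitely many iterated commutators of
  generators of \<open>N\<close> (Schreier), and descending through the layers gives \<open>N \<subseteq> K\<close>,
  after which coset representatives of \<open>N\<close> give \<open>G \<subseteq> K\<close>. Then \<open>\<xi> 1\<close> shadows
  \<open>y\<close>. Expansivity of the action is inherited directly from that of \<open>f\<^sub>g\<close>.
\<close>

section \<open>Commutators and the lower central series of a normal subgroup\<close>

definition commutator :: "('a, 'm) monoid_scheme \<Rightarrow> 'a \<Rightarrow> 'a \<Rightarrow> 'a" where
  "commutator G x y = x \<otimes>\<^bsub>G\<^esub> y \<otimes>\<^bsub>G\<^esub> inv\<^bsub>G\<^esub> x \<otimes>\<^bsub>G\<^esub> inv\<^bsub>G\<^esub> y"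

context group begin

lemma inv_mult_cancel_left [simp]: "x \<in> carrier G \<Longrightarrow> y \<in> carrier G \<Longrightarrow> inv x \<otimes> (x \<otimes> y) = y"
  by (simp add: m_assoc[symmetric])

lemma mult_inv_cancel_left [simp]: "x \<in> carrier G \<Longrightarrow> y \<in> carrier G \<Longrightarrow> x \<otimes> (inv x \<otimes> y) = y"
  by (simp add: m_assoc[symmetric])

lemma commutator_closed [simp]:
  "x \<in> carrier G \<Longrightarrow> y \<in> carrier G \<Longrightarrow> commutator G x y \<in> carrier G"
  by (simp add: commutator_def)

lemma conj_commutator:
  "\<lbrakk>a \<in> carrier G; x \<in> carrier G; y \<in> carrier G\<rbrakk> \<Longrightarrow>
   a \<otimes> commutator G x y \<otimes> inv a = commutator G (a \<otimes> x \<otimes> inv a) (a \<otimes> y \<otimes> inv a)"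
  by (simp add: commutator_def m_assoc inv_mult_group)

lemma commutator_mult_left:
  "\<lbrakk>x1 \<in> carrier G; x2 \<in> carrier G; y \<in> carrier G\<rbrakk> \<Longrightarrow>
   commutator G (x1 \<otimes> x2) y = (x1 \<otimes> commutator G x2 y \<otimes> inv x1) \<otimes> commutator G x1 y"
  by (simp add: commutator_def m_assoc inv_mult_group)

lemma commutator_inv_left:
  "\<lbrakk>x \<in> carrier G; y \<in> carrier G\<rbrakk> \<Longrightarrow>
   commutator G (inv x) y = inv x \<otimes> inv (commutator G x y) \<otimes> inv (inv x)"
  by (simp add: commutator_def m_assoc inv_mult_group)

lemma commutator_mult_right:
  "\<lbrakk>x \<in> carrier G; y1 \<in> carrier G; y2 \<in> carrier G\<rbrakk> \<Longrightarrow>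
   commutator G x (y1 \<otimes> y2) = commutator G x y1 \<otimes> (y1 \<otimes> commutator G x y2 \<otimes> inv y1)"
  by (simp add: commutator_def m_assoc inv_mult_group)

lemma commutator_inv_right:
  "\<lbrakk>x \<in> carrier G; y \<in> carrier G\<rbrakk> \<Longrightarrow>
   commutator G x (inv y) = inv y \<otimes> inv (commutator G x y) \<otimes> inv (inv y)"
  by (simp add: commutator_def m_assoc inv_mult_group)

lemma conj_eq_commutator_mult:
  "\<lbrakk>x \<in> carrier G; y \<in> carrier G\<rbrakk> \<Longrightarrow> x \<otimes> y \<otimes> inv x = commutator G x y \<otimes> y"
  by (simp add: commutator_def m_assoc)

end

context normal begin

abbreviation lcs :: "nat \<Rightarrow> 'a set" where
  "lcs \<equiv> lower_central (G\<lparr>carrier := H\<rparr>)"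

lemma lcs_Suc_eq_generate_if_subset:
  assumes "lcs i \<subseteq> H"
  shows "lcs (Suc i) = generate G {commutator G x y | x y. x \<in> H \<and> y \<in> lcs i}"
proof -
  have inv_eq: "inv\<^bsub>G\<lparr>carrier := H\<rparr>\<^esub> y = inv y" if "y \<in> H" for y
    using that m_inv_consistent subgroup_axioms by blast
  have inv_eq': "inv\<^bsub>G\<lparr>carrier := H\<rparr>\<^esub> y = inv y" if "y \<in> lcs i" for y
    using that assms inv_eq by blast
  have gens: "(\<Union>x\<in>H. \<Union>y\<in>lcs i. {x \<otimes> y \<otimes> inv\<^bsub>G\<lparr>carrier := H\<rparr>\<^esub> x \<otimes> inv\<^bsub>G\<lparr>carrier := H\<rparr>\<^esub> y})
      = {commutator G x y | x y. x \<in> H \<and> y \<in> lcs i}"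
    using assms by (auto simp: commutator_def inv_eq inv_eq')
  have "{commutator G x y | x y. x \<in> H \<and> y \<in> lcs i} \<subseteq> H"
    using assms by (auto simp: commutator_def)
  then show ?thesis
    by (simp add: gens generate_consistent[OF _ subgroup_axioms])
qed

lemma lcs_normal: "lcs i \<subseteq> H \<and> lcs i \<lhd> G"
proof (induction i)
  case 0
  show ?case by (simp add: normal_axioms)
next
  case (Suc i)
  let ?C = "{commutator G x y | x y. x \<in> H \<and> y \<in> lcs i}"
  have C: "?C \<subseteq> H"
    using Suc by (auto simp: commutator_def)
  have "generate G ?C \<lhd> G"
  proof (rule normal_generateI)
    show "?C \<subseteq> carrier G" using C subset by blast
    fix c a assume "c \<in> ?C" and a: "a \<in> carrier G"
    then obtain x y where xy: "c = commutator G x y" "x \<in> H" "y \<in> lcs i" by blast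
    have "a \<otimes> x \<otimes> inv a \<in> H" "a \<otimes> y \<otimes> inv a \<in> lcs i"
      using xy a Suc.IH normal_inv_iff normal_axioms by blast+
    moreover have "a \<otimes> c \<otimes> inv a = commutator G (a \<otimes> x \<otimes> inv a) (a \<otimes> y \<otimes> inv a)"
      using xy a Suc.IH by (meson conj_commutator mem_carrier subsetD)
    ultimately show "a \<otimes> c \<otimes> inv a \<in> ?C" by blast
  qed
  moreover have "generate G ?C \<subseteq> H"
    using C by (rule generate_subgroup_incl[OF _ subgroup_axioms])
  ultimately show ?case
    using lcs_Suc_eq_generate_if_subset Suc.IH by simp
qed

lemma lcs_subset: "lcs i \<subseteq> H"
  using lcs_normal by blast

lemma lcs_normal_subgroup: "lcs i \<lhd> G"
  using lcs_normal by blast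

lemma lcs_Suc_eq_generate:
  "lcs (Suc i) = generate G {commutator G x y | x y. x \<in> H \<and> y \<in> lcs i}"
  using lcs_Suc_eq_generate_if_subset[OF lcs_subset] .

lemma commutator_mem_lcs_Suc: "x \<in> H \<Longrightarrow> y \<in> lcs i \<Longrightarrow> commutator G x y \<in> lcs (Suc i)"
  by (subst lcs_Suc_eq_generate) (auto intro: generate.incl)

lemma lcs_Suc_subset: "lcs (Suc i) \<subseteq> lcs i"
proof -
  interpret L: normal "lcs i" G by (rule lcs_normal_subgroup)
  have "commutator G x y \<in> lcs i" if "x \<in> H" "y \<in> lcs i" for x y
  proof -
    have "commutator G x y = (x \<otimes> y \<otimes> inv x) \<otimes> inv y"
      using that by (simp add: commutator_def)
    then show ?thesis
      using that by (simp add: L.inv_op_closed2)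
  qed
  then show ?thesis
    by (subst lcs_Suc_eq_generate) (rule generate_subgroup_incl[OF _ L.subgroup_axioms], blast)
qed

end

declare lower_central.simps(2) [simp del]

primrec iterated_commutators :: "('a, 'm) monoid_scheme \<Rightarrow> 'a set \<Rightarrow> nat \<Rightarrow> 'a set" where
  "iterated_commutators G B 0 = B"
| "iterated_commutators G B (Suc i) = (\<lambda>(x, c). commutator G x c) ` (B \<times> iterated_commutators G B i)"

lemma finite_iterated_commutators: "finite B \<Longrightarrow> finite (iterated_commutators G B i)"
  by (induction i) auto

context normal begin

lemma iterated_commutators_subset_lcs:
  "B \<subseteq> H \<Longrightarrow> iterated_commutators G B i \<subseteq> lcs i"
  by (induction i) (auto intro: commutator_mem_lcs_Suc)

lemma commutator_left_mem_generate:
  assumes W: "subgroup W G" "\<And>n w. n \<in> H \<Longrightarrow> w \<in> W \<Longrightarrow> n \<otimes> w \<otimes> inv n \<in> W"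
    and c: "c \<in> carrier G" and B: "B \<subseteq> H" "\<And>b. b \<in> B \<Longrightarrow> commutator G b c \<in> W"
    and x: "x \<in> generate G B"
  shows "commutator G x c \<in> W"
proof -
  have "subgroup {x \<in> H. commutator G x c \<in> W} G"
  proof (rule subgroup.intro)
    fix a b assume a: "a \<in> {x \<in> H. commutator G x c \<in> W}" and b: "b \<in> {x \<in> H. commutator G x c \<in> W}"
    then have "(a \<otimes> commutator G b c \<otimes> inv a) \<otimes> commutator G a c \<in> W"
      using W by (auto intro: subgroup.m_closed)
    then show "a \<otimes> b \<in> {x \<in> H. commutator G x c \<in> W}"
      using a b c by (simp add: commutator_mult_left mem_carrier)
    have "inv a \<in> H" "inv (commutator G a c) \<in> W"
      using a subgroup.m_inv_closed[OF W(1)] by auto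
    then have "inv a \<otimes> inv (commutator G a c) \<otimes> inv (inv a) \<in> W"
      using W(2) by blast
    then show "inv a \<in> {x \<in> H. commutator G x c \<in> W}"
      using a c by (simp add: commutator_inv_left mem_carrier)
  qed (use c subgroup.one_closed[OF W(1)] in \<open>auto simp: commutator_def\<close>)
  moreover have "B \<subseteq> {x \<in> H. commutator G x c \<in> W}"
    using B by blast
  ultimately show ?thesis
    using x generate_subgroup_incl by blast
qed

lemma commutator_right_mem_generate:
  assumes W: "subgroup W G" "\<And>n w. n \<in> H \<Longrightarrow> w \<in> W \<Longrightarrow> n \<otimes> w \<otimes> inv n \<in> W"
    and x: "x \<in> carrier G" and C: "C \<subseteq> H" "\<And>c. c \<in> C \<Longrightarrow> commutator G x c \<in> W"
    and y: "y \<in> generate G C"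
  shows "commutator G x y \<in> W"
proof -
  have "subgroup {y \<in> H. commutator G x y \<in> W} G"
  proof (rule subgroup.intro)
    fix a b assume a: "a \<in> {y \<in> H. commutator G x y \<in> W}" and b: "b \<in> {y \<in> H. commutator G x y \<in> W}"
    then have "commutator G x a \<otimes> (a \<otimes> commutator G x b \<otimes> inv a) \<in> W"
      using W by (auto intro: subgroup.m_closed)
    then show "a \<otimes> b \<in> {y \<in> H. commutator G x y \<in> W}"
      using a b x by (simp add: commutator_mult_right mem_carrier)
    have "inv a \<in> H" "inv (commutator G x a) \<in> W"
      using a subgroup.m_inv_closed[OF W(1)] by auto
    then have "inv a \<otimes> inv (commutator G x a) \<otimes> inv (inv a) \<in> W"
      using W(2) by blast
    then show "inv a \<in> {y \<in> H. commutator G x y \<in> W}"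
      using a x by (simp add: commutator_inv_right mem_carrier)
  qed (use x subgroup.one_closed[OF W(1)] in \<open>auto simp: commutator_def\<close>)
  moreover have "C \<subseteq> {y \<in> H. commutator G x y \<in> W}"
    using C by blast
  ultimately show ?thesis
    using y generate_subgroup_incl by blast
qed

lemma lcs_subset_generate_iterated_commutators:
  assumes B: "B \<subseteq> H" "generate G B = H"
  shows "lcs i \<subseteq> generate G (iterated_commutators G B i \<union> lcs (Suc i))"
proof (induction i)
  case 0
  have "generate G B \<subseteq> generate G (B \<union> lcs 1)"
    by (rule mono_generate) blast
  then show ?case
    using B by simp
next
  case (Suc i)
  define W where "W = generate G (iterated_commutators G B (Suc i) \<union> lcs (Suc (Suc i)))"
  have gens_W: "iterated_commutators G B (Suc i) \<subseteq> W" "lcs (Suc (Suc i)) \<subseteq> W"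
    unfolding W_def by (auto intro: generate.incl)
  have gens_lcs: "iterated_commutators G B (Suc i) \<union> lcs (Suc (Suc i)) \<subseteq> lcs (Suc i)"
    using iterated_commutators_subset_lcs[OF B(1)] lcs_Suc_subset by blast
  have W_subgroup: "subgroup W G"
    unfolding W_def using gens_lcs lcs_subset subset by (intro generate_is_subgroup) blast
  have W_lcs: "W \<subseteq> lcs (Suc i)"
    unfolding W_def using gens_lcs normal_imp_subgroup[OF lcs_normal_subgroup]
    by (rule generate_subgroup_incl)
  have comm_W: "commutator G n w \<in> W" if "n \<in> H" "w \<in> W" for n w
    using that W_lcs gens_W commutator_mem_lcs_Suc by blast
  have conj_W: "n \<otimes> w \<otimes> inv n \<in> W" if "n \<in> H" "w \<in> W" for n w
  proof -
    have "commutator G n w \<otimes> w \<in> W"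
      using that comm_W subgroup.m_closed[OF W_subgroup] by blast
    moreover have "w \<in> carrier G"
      using subgroup.mem_carrier[OF W_subgroup that(2)] .
    ultimately show ?thesis
      using conj_eq_commutator_mult[OF mem_carrier[OF that(1)]] by simp
  qed
  have comm_gen: "commutator G x c \<in> W" if "x \<in> H" "c \<in> iterated_commutators G B i" for x c
  proof (rule commutator_left_mem_generate[OF W_subgroup conj_W _ B(1)])
    show "c \<in> carrier G"
      using that iterated_commutators_subset_lcs[OF B(1)] lcs_subset subset by blast
    show "commutator G b c \<in> W" if "b \<in> B" for b
      using that \<open>c \<in> iterated_commutators G B i\<close> gens_W(1) by force
    show "x \<in> generate G B"
      using that B(2) by blast
  qed
  have "commutator G x y \<in> W" if "x \<in> H" "y \<in> lcs i" for x y
  proof (rule commutator_right_mem_generate[OF W_subgroup conj_W mem_carrier[OF that(1)]])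
    show "iterated_commutators G B i \<union> lcs (Suc i) \<subseteq> H"
      using iterated_commutators_subset_lcs[OF B(1)] lcs_subset by blast
    show "commutator G x c \<in> W" if "c \<in> iterated_commutators G B i \<union> lcs (Suc i)" for c
      using that \<open>x \<in> H\<close> comm_gen gens_W(2) commutator_mem_lcs_Suc by blast
    show "y \<in> generate G (iterated_commutators G B i \<union> lcs (Suc i))"
      using that Suc.IH by blast
  qed
  then have "lcs (Suc i) \<subseteq> W"
    by (subst lcs_Suc_eq_generate) (rule generate_subgroup_incl[OF _ W_subgroup], blast)
  then show ?case
    by (simp add: W_def)
qed

end

section \<open>Subgroups of finite index\<close>

context group begin

lemma finite_index_transversal:
  assumes H: "subgroup H G" and fin: "finite (rcosets H)"
  obtains \<rho> where "finite (\<rho> ` carrier G)"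
    and "\<And>x. x \<in> carrier G \<Longrightarrow> \<rho> x \<in> carrier G"
    and "\<And>x. x \<in> carrier G \<Longrightarrow> x \<otimes> inv (\<rho> x) \<in> H"
    and "\<And>x. x \<in> H \<Longrightarrow> \<rho> x = \<one>"
proof -
  define \<rho> where "\<rho> x = (if x \<in> H then \<one> else SOME t. t \<in> H #> x)" for x
  have "\<rho> ` carrier G \<subseteq> insert \<one> ((\<lambda>C. SOME t. t \<in> C) ` (rcosets H))"
  proof
    fix t assume "t \<in> \<rho> ` carrier G"
    then obtain x where x: "x \<in> carrier G" "t = \<rho> x" by blast
    have "H #> x \<in> rcosets H"
      using x by (auto simp: RCOSETS_def)
    then show "t \<in> insert \<one> ((\<lambda>C. SOME t. t \<in> C) ` (rcosets H))"
      using x by (auto simp: \<rho>_def)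
  qed
  then have "finite (\<rho> ` carrier G)"
    using fin finite_subset by auto
  moreover have "\<rho> x \<in> carrier G \<and> x \<otimes> inv (\<rho> x) \<in> H" if x: "x \<in> carrier G" for x
  proof -
    have "\<exists>h\<in>H. \<rho> x = h \<otimes> x"
    proof (cases "x \<in> H")
      case True
      then show ?thesis
        using H x by (intro bexI[of _ "inv x"]) (auto simp: \<rho>_def subgroup.m_inv_closed)
    next
      case False
      have "(SOME t. t \<in> H #> x) \<in> H #> x"
        using rcos_self[OF x H] by (rule someI)
      then show ?thesis
        using False by (auto simp: \<rho>_def r_coset_def)
    qed
    then obtain h where h: "h \<in> H" "\<rho> x = h \<otimes> x"
      by blast
    have hc: "h \<in> carrier G"
      using subgroup.mem_carrier[OF H h(1)] .
    have "x \<otimes> inv (\<rho> x) = inv h"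
      using h hc x by (simp add: inv_mult_group m_assoc)
    then show ?thesis
      using h hc x subgroup.m_inv_closed[OF H h(1)] by simp
  qed
  moreover have "\<rho> x = \<one>" if "x \<in> H" for x
    using that by (simp add: \<rho>_def)
  ultimately show ?thesis
    using that by blast
qed

lemma mult_generate_closed:
  assumes S: "S \<subseteq> carrier G" "\<And>s. s \<in> S \<Longrightarrow> inv s \<in> S"
    and P: "P \<subseteq> carrier G" "\<And>z s. z \<in> P \<Longrightarrow> s \<in> S \<Longrightarrow> z \<otimes> s \<in> P"
    and h: "h \<in> generate G S"
  shows "z \<in> P \<Longrightarrow> z \<otimes> h \<in> P"
  using h
proof (induction arbitrary: z)
  case one
  then show ?case
    using P(1) by auto
next
  case (incl s)
  then show ?case by (simp add: P(2))
next
  case (inv s)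
  then show ?case by (simp add: P(2) S(2))
next
  case (eng h1 h2)
  have "z \<in> carrier G" "h1 \<in> carrier G" "h2 \<in> carrier G"
    using eng P(1) generate_in_carrier[OF S(1)] by auto
  then show ?case
    using eng.IH eng.prems by (simp add: m_assoc[symmetric])
qed

text \<open>Schreier's lemma: with a transversal \<open>\<rho>\<close>, the elements \<open>t s \<rho>(t s)\<^sup>-\<^sup>1\<close>
  generate \<open>H\<close>.\<close>

lemma finite_index_subgroup_finitely_generated:
  assumes H: "subgroup H G" "finite (rcosets H)" and S: "finite_symmetric_generating G S"
  obtains B where "finite B" "B \<subseteq> H" "generate G B = H"
proof -
  obtain \<rho> where fin: "finite (\<rho> ` carrier G)"
    and \<rho>: "\<And>x. x \<in> carrier G \<Longrightarrow> \<rho> x \<in> carrier G"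
      "\<And>x. x \<in> carrier G \<Longrightarrow> x \<otimes> inv (\<rho> x) \<in> H"
      "\<And>x. x \<in> H \<Longrightarrow> \<rho> x = \<one>"
    using finite_index_transversal[OF H] by blast
  have S_carrier: "S \<subseteq> carrier G" and S_inv: "\<And>s. s \<in> S \<Longrightarrow> inv s \<in> S"
    and S_gen: "generate G S = carrier G" and S_fin: "finite S"
    using S by (auto simp: finite_symmetric_generating_def)
  define T where "T = \<rho> ` carrier G"
  define B where "B = (\<lambda>(t, s). t \<otimes> s \<otimes> inv (\<rho> (t \<otimes> s))) ` (T \<times> S)"
  define P where "P = {n \<otimes> t | n t. n \<in> generate G B \<and> t \<in> T}"
  have T_carrier: "T \<subseteq> carrier G"
    using \<rho>(1) by (auto simp: T_def)
  have B_H: "B \<subseteq> H"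
    using \<rho>(2) T_carrier S_carrier by (force simp: B_def)
  have gen_B_H: "generate G B \<subseteq> H"
    using generate_subgroup_incl[OF B_H H(1)] .
  have gen_B_carrier: "generate G B \<subseteq> carrier G"
    using gen_B_H subgroup.subset[OF H(1)] by blast
  have P_carrier: "P \<subseteq> carrier G"
    using gen_B_carrier T_carrier by (auto simp: P_def)
  have P_step: "z \<otimes> s \<in> P" if "z \<in> P" "s \<in> S" for z s
  proof -
    obtain n t where nt: "n \<in> generate G B" "t \<in> T" "z = n \<otimes> t"
      using \<open>z \<in> P\<close> by (auto simp: P_def)
    have c: "n \<in> carrier G" "t \<in> carrier G" "s \<in> carrier G"
      using nt that gen_B_carrier T_carrier S_carrier by auto
    then have c': "\<rho> (t \<otimes> s) \<in> carrier G"
      using \<rho>(1) by simp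
    have "z \<otimes> s = (n \<otimes> (t \<otimes> s \<otimes> inv (\<rho> (t \<otimes> s)))) \<otimes> \<rho> (t \<otimes> s)"
      using nt c c' by (simp add: m_assoc)
    moreover have "t \<otimes> s \<otimes> inv (\<rho> (t \<otimes> s)) \<in> B"
      using nt that by (auto simp: B_def)
    then have "n \<otimes> (t \<otimes> s \<otimes> inv (\<rho> (t \<otimes> s))) \<in> generate G B"
      using nt(1) by (auto intro: generate.eng generate.incl)
    moreover have "\<rho> (t \<otimes> s) \<in> T"
      using c by (simp add: T_def)
    ultimately show ?thesis
      by (auto simp: P_def)
  qed
  have "\<one> \<in> T"
    using \<rho>(3)[OF subgroup.one_closed[OF H(1)]] by (force simp: T_def)
  then have one_P: "\<one> \<in> P"
    by (force simp: P_def intro: generate.one)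
  have "H \<subseteq> generate G B"
  proof
    fix x assume x: "x \<in> H"
    have xc: "x \<in> carrier G"
      using subgroup.mem_carrier[OF H(1) x] .
    have "\<one> \<otimes> x \<in> P"
      using mult_generate_closed[OF S_carrier S_inv P_carrier P_step _ one_P] S_gen xc by blast
    then obtain n t where nt: "n \<in> generate G B" "t \<in> T" "x = n \<otimes> t"
      using xc by (auto simp: P_def)
    obtain w where w: "w \<in> carrier G" "t = \<rho> w"
      using nt(2) by (auto simp: T_def)
    have nc: "n \<in> carrier G" "t \<in> carrier G"
      using nt gen_B_carrier T_carrier by auto
    have "t = inv n \<otimes> x"
      using nt nc by simp
    then have "t \<in> H"
      using x gen_B_H nt(1) subgroup.m_inv_closed[OF H(1)] subgroup.m_closed[OF H(1)] by auto
    then have "w \<in> H"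
      using \<rho>(2)[OF w(1)] w subgroup.m_closed[OF H(1)] nc
      by (metis inv_closed m_assoc l_inv r_one)
    then show "x \<in> generate G B"
      using nt nc w \<rho>(3) by simp
  qed
  moreover have "finite B"
    using fin S_fin by (simp add: B_def T_def)
  ultimately show ?thesis
    using that B_H gen_B_H by blast
qed

lemma finite_index_pow_mem:
  assumes H: "subgroup H G" "finite (rcosets H)" and g: "g \<in> carrier G"
  obtains m :: nat where "m \<ge> 1" "g [^] m \<in> H"
proof -
  define f where "f j = H #> g [^] j" for j :: nat
  have "range f \<subseteq> rcosets H"
    using g by (auto simp: f_def RCOSETS_def)
  then have "\<not> inj f"
    using finite_subset[OF _ H(2)] finite_imageD[of f UNIV] by auto
  then obtain i j where "f i = f j" "i \<noteq> j"
    unfolding inj_def by blast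
  then obtain i j where ij: "f i = f j" "i < j"
    by (metis linorder_neqE_nat)
  have "g [^] j \<in> H #> g [^] i"
    using ij(1) rcos_self[OF _ H(1), of "g [^] j"] g by (simp add: f_def)
  then obtain h where h: "h \<in> H" "g [^] j = h \<otimes> g [^] i"
    by (auto simp: r_coset_def)
  have "g [^] (j - i) \<otimes> g [^] i = h \<otimes> g [^] i"
    using ij(2) g h(2) by (simp add: nat_pow_mult)
  then have "g [^] (j - i) = h"
    using g subgroup.mem_carrier[OF H(1) h(1)] by (simp add: right_cancel)
  then show ?thesis
    using that[of "j - i"] h(1) ij(2) by simp
qed

end

section \<open>Virtually nilpotent groups\<close>

context normal begin

lemma lcs_conj_pow_periodic:
  fixes k :: int and m :: nat
  assumes g: "g \<in> carrier G" and m: "m \<ge> 1" "g [^] m \<in> H" and x: "x \<in> lcs i"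
  shows "\<exists>r<m. inv (g [^] r \<otimes> x \<otimes> inv (g [^] r)) \<otimes> (g [^] k \<otimes> x \<otimes> inv (g [^] k)) \<in> lcs (Suc i)"
proof -
  interpret L: normal "lcs (Suc i)" G
    by (rule lcs_normal_subgroup)
  define r where "r = nat (k mod int m)"
  define q where "q = k div int m"
  define n where "n = (g [^] m) [^] q"
  have "r < m"
    using m by (simp add: r_def nat_less_iff)
  have n: "n \<in> H"
    unfolding n_def by (rule subgroup_int_pow_closed[OF subgroup_axioms m(2)])
  have "k = int r + int m * q"
    using m by (simp add: r_def q_def)
  then have "g [^] k = g [^] (int r) \<otimes> g [^] (int m * q)"
    using g by (metis int_pow_mult)
  also have "g [^] (int m * q) = n"
    using g by (simp add: n_def int_pow_pow[symmetric] int_pow_int)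
  finally have gk: "g [^] k = g [^] r \<otimes> n"
    by (simp add: int_pow_int)
  have xc: "x \<in> carrier G"
    using x lcs_subset mem_carrier by blast
  have "inv x \<in> lcs i"
    using normal_imp_subgroup[OF lcs_normal_subgroup] x by (rule subgroup.m_inv_closed)
  then have "commutator G n (inv x) \<in> lcs (Suc i)"
    by (rule commutator_mem_lcs_Suc[OF n])
  then have "g [^] r \<otimes> inv (commutator G n (inv x)) \<otimes> inv (g [^] r) \<in> lcs (Suc i)"
    using g by (simp add: L.inv_op_closed2)
  moreover have "inv (g [^] r \<otimes> x \<otimes> inv (g [^] r)) \<otimes> (g [^] k \<otimes> x \<otimes> inv (g [^] k))
      = g [^] r \<otimes> inv (commutator G n (inv x)) \<otimes> inv (g [^] r)"
    unfolding gk using g mem_carrier[OF n] xc by (simp add: commutator_def m_assoc inv_mult_group)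
  ultimately show ?thesis
    using \<open>r < m\<close> by (intro exI[of _ r]) simp
qed

end

text \<open>In the application \<open>K\<close> is the set of group elements under which a choice of shadowing
  points is equivariant; this is the property of \<open>K\<close> that the dynamics provides.\<close>

definition power_coset_closed :: "('g, 'm) monoid_scheme \<Rightarrow> 'g \<Rightarrow> 'g set \<Rightarrow> 'g set \<Rightarrow> bool" where
  "power_coset_closed G g A K \<longleftrightarrow>
     (\<forall>s\<in>carrier G. (\<forall>k::int. \<exists>a\<in>A. \<exists>b\<in>K. g [^]\<^bsub>G\<^esub> k \<otimes>\<^bsub>G\<^esub> s = a \<otimes>\<^bsub>G\<^esub> g [^]\<^bsub>G\<^esub> k \<otimes>\<^bsub>G\<^esub> b) \<longrightarrow> s \<in> K)"

context group begin

lemma power_coset_closed_mem: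
  assumes K: "power_coset_closed G g A K" and Q: "Q \<lhd> G" "Q \<subseteq> K"
    and A: "A \<subseteq> carrier G" and g: "g \<in> carrier G" and s: "s \<in> carrier G"
    and cosets: "\<And>k::int. \<exists>a\<in>A. inv a \<otimes> (g [^] k \<otimes> s \<otimes> inv (g [^] k)) \<in> Q"
  shows "s \<in> K"
proof -
  interpret Q: normal Q G by (rule Q(1))
  have "\<exists>a\<in>A. \<exists>b\<in>K. g [^] k \<otimes> s = a \<otimes> g [^] k \<otimes> b" for k :: int
  proof -
    obtain a where a: "a \<in> A" "inv a \<otimes> (g [^] k \<otimes> s \<otimes> inv (g [^] k)) \<in> Q"
      using cosets by blast
    define b where "b = inv (g [^] k) \<otimes> (inv a \<otimes> (g [^] k \<otimes> s \<otimes> inv (g [^] k))) \<otimes> g [^] k"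
    have "b \<in> Q"
      unfolding b_def by (rule Q.inv_op_closed1[OF int_pow_closed[OF g] a(2)])
    moreover have "a \<otimes> g [^] k \<otimes> b = g [^] k \<otimes> s"
      using a(1) A g s by (simp add: b_def m_assoc subsetD)
    ultimately show ?thesis
      using a(1) Q(2) by (metis subsetD)
  qed
  then show ?thesis
    using K s by (simp add: power_coset_closed_def)
qed

end

context normal begin

lemma lcs_subset_if_lcs_Suc_subset:
  fixes m :: nat
  assumes K: "subgroup K G" "power_coset_closed G g A K" "lcs (Suc i) \<subseteq> K"
    and A: "A \<subseteq> carrier G"
    and conj_A: "\<And>r c. r < m \<Longrightarrow> c \<in> iterated_commutators G B i \<Longrightarrow> g [^] r \<otimes> c \<otimes> inv (g [^] r) \<in> A"
    and B: "B \<subseteq> H" "generate G B = H"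
    and g: "g \<in> carrier G" "m \<ge> 1" "g [^] m \<in> H"
  shows "lcs i \<subseteq> K"
proof -
  have "c \<in> K" if c: "c \<in> iterated_commutators G B i" for c
  proof (rule power_coset_closed_mem[OF K(2) lcs_normal_subgroup K(3) A g(1)])
    show "c \<in> carrier G"
      using c iterated_commutators_subset_lcs[OF B(1)] lcs_subset mem_carrier by blast
    fix k :: int
    obtain r where "r < m" "inv (g [^] r \<otimes> c \<otimes> inv (g [^] r)) \<otimes> (g [^] k \<otimes> c \<otimes> inv (g [^] k)) \<in> lcs (Suc i)"
      using lcs_conj_pow_periodic[OF g] c iterated_commutators_subset_lcs[OF B(1)] by blast
    then show "\<exists>a\<in>A. inv a \<otimes> (g [^] k \<otimes> c \<otimes> inv (g [^] k)) \<in> lcs (Suc i)"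
      using conj_A c by blast
  qed
  then have "generate G (iterated_commutators G B i \<union> lcs (Suc i)) \<subseteq> K"
    using K(3) by (intro generate_subgroup_incl[OF _ K(1)]) blast
  then show ?thesis
    using lcs_subset_generate_iterated_commutators[OF B] by blast
qed

end

lemma (in normal) subset_of_power_coset_closed:
  fixes m :: nat
  assumes nilpotent: "lcs c = {\<one>}"
    and K: "subgroup K G" "power_coset_closed G g A K" and A: "A \<subseteq> carrier G"
    and conj_A: "\<And>i r x. i < c \<Longrightarrow> r < m \<Longrightarrow> x \<in> iterated_commutators G B i \<Longrightarrow>
       g [^] r \<otimes> x \<otimes> inv (g [^] r) \<in> A"
    and B: "B \<subseteq> H" "generate G B = H"
    and g: "g \<in> carrier G" "m \<ge> 1" "g [^] m \<in> H"
  shows "H \<subseteq> K"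
proof -
  have "lcs (c - j) \<subseteq> K" for j
  proof (induction j)
    case 0
    show ?case
      using nilpotent subgroup.one_closed[OF K(1)] by simp
  next
    case (Suc j)
    show ?case
    proof (cases "j < c")
      case True
      then have "lcs (Suc (c - Suc j)) \<subseteq> K"
        using Suc.IH by (simp add: Suc_diff_Suc)
      moreover have "g [^] r \<otimes> x \<otimes> inv (g [^] r) \<in> A"
        if "r < m" "x \<in> iterated_commutators G B (c - Suc j)" for r x
        using that True by (intro conj_A) auto
      ultimately show ?thesis
        using lcs_subset_if_lcs_Suc_subset[OF K _ A _ B g] by blast
    next
      case False
      then show ?thesis
        using Suc.IH by simp
    qed
  qed
  from this[of c] show ?thesis
    by simp
qed

lemma (in group) virtually_nilpotent_power_coset_closed:
  assumes vn: "virtually_nilpotent G" and S: "finite_symmetric_generating G S"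
    and g: "g \<in> carrier G"
  obtains A where "finite A" "A \<subseteq> carrier G"
    "\<And>K. subgroup K G \<Longrightarrow> power_coset_closed G g A K \<Longrightarrow> carrier G \<subseteq> K"
proof -
  obtain N where N: "N \<lhd> G" and nil: "nilpotent_group (G\<lparr>carrier := N\<rparr>)"
    and fin: "finite (rcosets N)"
    using vn by (auto simp: virtually_nilpotent_def)
  interpret N: normal N G by (rule N)
  obtain c where c: "N.lcs c = {\<one>}"
    using nil by (auto simp: nilpotent_group_def)
  obtain B where B: "finite B" "B \<subseteq> N" "generate G B = N"
    using finite_index_subgroup_finitely_generated[OF N.subgroup_axioms fin S] by blast
  obtain m :: nat where m: "m \<ge> 1" "g [^] m \<in> N"
    using finite_index_pow_mem[OF N.subgroup_axioms fin g] by blast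
  obtain \<rho> where \<rho>: "finite (\<rho> ` carrier G)" "\<And>x. x \<in> carrier G \<Longrightarrow> \<rho> x \<in> carrier G"
    "\<And>x. x \<in> carrier G \<Longrightarrow> x \<otimes> inv (\<rho> x) \<in> N"
    by (rule finite_index_transversal[OF N.subgroup_axioms fin]) auto
  define A where "A = \<rho> ` carrier G \<union>
    (\<Union>i<c. \<Union>r<m. (\<lambda>x. g [^] r \<otimes> x \<otimes> inv (g [^] r)) ` iterated_commutators G B i)"
  have "finite A"
    using \<rho>(1) B(1) by (simp add: A_def finite_iterated_commutators)
  moreover have A_carrier: "A \<subseteq> carrier G"
    using \<rho>(2) g N.iterated_commutators_subset_lcs[OF B(2)] N.lcs_subset N.mem_carrier
    by (fastforce simp: A_def)
  moreover have "carrier G \<subseteq> K" if K: "subgroup K G" "power_coset_closed G g A K" for K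
  proof
    have conj_A: "g [^] r \<otimes> x \<otimes> inv (g [^] r) \<in> A"
      if "i < c" "r < m" "x \<in> iterated_commutators G B i" for i r x
      using that unfolding A_def by (intro UnI2 UN_I[of i] UN_I[of r]) auto
    have "N \<subseteq> K"
      using N.subset_of_power_coset_closed[OF c K A_carrier conj_A B(2,3) g m] .
    fix s assume s: "s \<in> carrier G"
    show "s \<in> K"
    proof (rule power_coset_closed_mem[OF K(2) N \<open>N \<subseteq> K\<close> A_carrier g s])
      fix k :: int
      define z where "z = g [^] k \<otimes> s \<otimes> inv (g [^] k)"
      have z: "z \<in> carrier G"
        using g s by (simp add: z_def)
      \<comment> \<open>The right coset representative also represents the left coset, by normality.\<close>
      have "inv (\<rho> z) \<otimes> (z \<otimes> inv (\<rho> z)) \<otimes> \<rho> z \<in> N"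
        using N.inv_op_closed1[OF \<rho>(2)[OF z] \<rho>(3)[OF z]] .
      then have "inv (\<rho> z) \<otimes> z \<in> N"
        using z \<rho>(2)[OF z] by (simp add: m_assoc)
      moreover have "\<rho> z \<in> A"
        using z by (simp add: A_def)
      ultimately show "\<exists>a\<in>A. inv a \<otimes> (g [^] k \<otimes> s \<otimes> inv (g [^] k)) \<in> N"
        unfolding z_def by blast
    qed
  qed
  ultimately show ?thesis
    using that by blast
qed

section \<open>Uniformly continuous actions and pseudotrajectories\<close>

lemma homeo_expansive_shadowing_unique:
  assumes "expansive_on integer_group (zpow_fun f) U"
  obtains \<Delta> where "\<Delta> > 0"
    "\<And>V e z p q. (\<Union>x\<in>V. ball x e) \<subseteq> U \<Longrightarrow> 2 * e \<le> \<Delta> \<Longrightarrow> (\<And>k. z k \<in> V) \<Longrightarrow>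
       (\<And>k. dist (z k) (zpow_fun f k p) < e) \<Longrightarrow> (\<And>k. dist (z k) (zpow_fun f k q) < e) \<Longrightarrow> p = q"
proof -
  obtain \<Delta> where \<Delta>: "\<Delta> > 0" "\<And>p q. p \<in> U \<Longrightarrow> q \<in> U \<Longrightarrow>
      (\<And>k. zpow_fun f k p \<in> U \<and> zpow_fun f k q \<in> U \<and> dist (zpow_fun f k p) (zpow_fun f k q) < \<Delta>) \<Longrightarrow> p = q"
    using assms by (auto simp: expansive_on_def)
  have "p = q"
    if U: "(\<Union>x\<in>V. ball x e) \<subseteq> U" and e: "2 * e \<le> \<Delta>" and z: "\<And>k. z k \<in> V"
      and p: "\<And>k. dist (z k) (zpow_fun f k p) < e" and q: "\<And>k. dist (z k) (zpow_fun f k q) < e"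
    for V e z p q
  proof -
    have in_U: "zpow_fun f k x \<in> U" if "dist (z k) (zpow_fun f k x) < e" for k x
    proof -
      have "zpow_fun f k x \<in> ball (z k) e"
        using that by simp
      then show ?thesis
        using z[of k] U by blast
    qed
    have "zpow_fun f 0 p \<in> U" "zpow_fun f 0 q \<in> U"
      using in_U p q by blast+
    moreover have "dist (zpow_fun f k p) (zpow_fun f k q) < \<Delta>" for k
      using dist_triangle[of "zpow_fun f k p" "zpow_fun f k q" "z k"] p[of k] q[of k] e
      by (simp add: dist_commute)
    ultimately show "p = q"
      using \<Delta>(2) in_U p q by (simp add: zpow_fun_def)
  qed
  then show ?thesis
    by (rule that[OF \<Delta>(1)])
qed

locale uniform_group_action = group G for G :: "('g, 'm) monoid_scheme" (structure) +
  fixes \<Phi> :: "'g \<Rightarrow> 'b::metric_space \<Rightarrow> 'b"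
  assumes uniformly_continuous_action: "uniformly_continuous_action G \<Phi>"
begin

lemma action_mult: "a \<in> carrier G \<Longrightarrow> b \<in> carrier G \<Longrightarrow> \<Phi> (a \<otimes> b) x = \<Phi> a (\<Phi> b x)"
  using uniformly_continuous_action by (simp add: uniformly_continuous_action_def is_action_def)

lemma action_one [simp]: "\<Phi> \<one> x = x"
  using uniformly_continuous_action by (simp add: uniformly_continuous_action_def is_action_def)

lemma zpow_fun_action:
  assumes g: "g \<in> carrier G"
  shows "zpow_fun (\<Phi> g) k = \<Phi> (g [^] k)"
proof -
  have nat_pow: "\<Phi> h ^^ n = \<Phi> (h [^] n)" if h: "h \<in> carrier G" for h and n :: nat
    by (induction n) (simp_all add: fun_eq_iff h action_mult funpow_Suc_right del: funpow.simps(2))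
  have "inv_into UNIV (\<Phi> g) = \<Phi> (inv g)"
  proof
    fix x
    have "inj (\<Phi> g)"
      by (rule inj_on_inverseI[of _ "\<Phi> (inv g)"]) (simp add: g action_mult[symmetric])
    then have "inv_into UNIV (\<Phi> g) (\<Phi> g (\<Phi> (inv g) x)) = \<Phi> (inv g) x"
      by (rule inv_into_f_f[OF _ UNIV_I])
    then show "inv_into UNIV (\<Phi> g) x = \<Phi> (inv g) x"
      by (simp add: g action_mult[symmetric])
  qed
  show ?thesis
  proof (cases "0 \<le> k")
    case True
    then have "g [^] k = g [^] nat k"
      by (metis int_nat_eq int_pow_int)
    then show ?thesis
      using True g by (simp add: zpow_fun_def nat_pow)
  next
    case False
    then have "g [^] k = inv g [^] nat (- k)"
      using g by (simp only: int_pow_def2 nat_pow_inv[OF g]) simp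
    then show ?thesis
      using False g \<open>inv_into UNIV (\<Phi> g) = \<Phi> (inv g)\<close> by (simp add: zpow_fun_def nat_pow)
  qed
qed

lemma uniformly_continuous_on_action:
  assumes a: "a \<in> carrier G"
  shows "uniformly_continuous_on UNIV (\<Phi> a)"
proof -
  obtain S where S: "finite_symmetric_generating G S"
    and S_uc: "\<And>s. s \<in> S \<Longrightarrow> uniformly_continuous_on UNIV (\<Phi> s)"
    using uniformly_continuous_action by (auto simp: uniformly_continuous_action_def)
  have "a \<in> generate G S"
    using a S by (simp add: finite_symmetric_generating_def)
  then show ?thesis
  proof induction
    case one
    then show ?case
      by (simp add: uniformly_continuous_on_id)
  next
    case (incl s)
    then show ?case by (rule S_uc)
  next
    case (inv s)
    then show ?case
      using S S_uc by (simp add: finite_symmetric_generating_def)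
  next
    case (eng h1 h2)
    have "h1 \<in> carrier G" "h2 \<in> carrier G"
      using eng S generate_in_carrier by (auto simp: finite_symmetric_generating_def)
    moreover have "uniformly_continuous_on (range (\<Phi> h2)) (\<Phi> h1)"
      using eng.IH(1) unfolding uniformly_continuous_on_def by blast
    then have "uniformly_continuous_on UNIV (\<lambda>x. \<Phi> h1 (\<Phi> h2 x))"
      by (rule uniformly_continuous_on_compose[OF eng.IH(2)])
    ultimately show ?case
      by (simp add: action_mult)
  qed
qed

lemma finite_uniformly_equicontinuous:
  assumes "finite A" "A \<subseteq> carrier G" "e > 0"
  shows "\<exists>\<delta>>0. \<forall>a\<in>A. \<forall>p q. dist p q < \<delta> \<longrightarrow> dist (\<Phi> a p) (\<Phi> a q) < e"
  using assms(1,2)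
proof (induction rule: finite_induct)
  case empty
  show ?case by (intro exI[of _ 1]) simp
next
  case (insert a A)
  obtain \<delta>1 where \<delta>1: "\<delta>1 > 0" "\<forall>b\<in>A. \<forall>p q. dist p q < \<delta>1 \<longrightarrow> dist (\<Phi> b p) (\<Phi> b q) < e"
    using insert by auto
  have "uniformly_continuous_on UNIV (\<Phi> a)"
    using insert.prems by (simp add: uniformly_continuous_on_action)
  then obtain \<delta>2 where \<delta>2: "\<delta>2 > 0" "\<forall>q\<in>UNIV. \<forall>p\<in>UNIV. dist p q < \<delta>2 \<longrightarrow> dist (\<Phi> a p) (\<Phi> a q) < e"
    using \<open>e > 0\<close> unfolding uniformly_continuous_on_def by blast
  show ?case
  proof (intro exI[of _ "min \<delta>1 \<delta>2"] conjI ballI allI impI)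
    show "min \<delta>1 \<delta>2 > 0"
      using \<delta>1(1) \<delta>2(1) by simp
    fix b and p q :: 'b assume "b \<in> insert a A" "dist p q < min \<delta>1 \<delta>2"
    then show "dist (\<Phi> b p) (\<Phi> b q) < e"
      using \<delta>1(2) \<delta>2(2) by auto
  qed
qed

lemma pseudotrajectory_mono:
  "pseudotrajectory G S \<Phi> d y \<Longrightarrow> d \<le> d' \<Longrightarrow> pseudotrajectory G S \<Phi> d' y"
  by (fastforce simp: pseudotrajectory_def)

lemma pseudotrajectory_step_bound:
  assumes S: "finite_symmetric_generating G S" and a: "a \<in> carrier G" and e: "e > 0"
  shows "\<exists>d>0. \<forall>y. pseudotrajectory G S \<Phi> d y \<longrightarrow>
           (\<forall>w\<in>carrier G. dist (y (a \<otimes> w)) (\<Phi> a (y w)) < e)"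
proof -
  have S_carrier: "S \<subseteq> carrier G"
    using S by (simp add: finite_symmetric_generating_def)
  have "a \<in> generate G S"
    using a S by (simp add: finite_symmetric_generating_def)
  then show ?thesis
    using e
  proof (induction arbitrary: e)
    case one
    then show ?case by (intro exI[of _ 1]) simp
  next
    case (incl s)
    then show ?case by (intro exI[of _ e]) (auto simp: pseudotrajectory_def)
  next
    case (inv s)
    then have "inv s \<in> S"
      using S by (simp add: finite_symmetric_generating_def)
    then show ?case
      using inv by (intro exI[of _ e]) (auto simp: pseudotrajectory_def)
  next
    case (eng h1 h2)
    have h: "h1 \<in> carrier G" "h2 \<in> carrier G"
      using eng generate_in_carrier[OF S_carrier] by auto
    obtain \<delta> where \<delta>: "\<delta> > 0" "\<forall>q\<in>UNIV. \<forall>p\<in>UNIV. dist p q < \<delta> \<longrightarrow> dist (\<Phi> h1 p) (\<Phi> h1 q) < e / 2"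
      using uniformly_continuous_on_action[OF h(1)] \<open>e > 0\<close>
      unfolding uniformly_continuous_on_def by (meson half_gt_zero)
    obtain d1 where d1: "d1 > 0" "\<forall>y. pseudotrajectory G S \<Phi> d1 y \<longrightarrow>
        (\<forall>w\<in>carrier G. dist (y (h1 \<otimes> w)) (\<Phi> h1 (y w)) < e / 2)"
      using eng.IH(1) \<open>e > 0\<close> by (meson half_gt_zero)
    obtain d2 where d2: "d2 > 0" "\<forall>y. pseudotrajectory G S \<Phi> d2 y \<longrightarrow>
        (\<forall>w\<in>carrier G. dist (y (h2 \<otimes> w)) (\<Phi> h2 (y w)) < \<delta>)"
      using eng.IH(2) \<delta>(1) by blast
    show ?case
    proof (intro exI[of _ "min d1 d2"] conjI allI impI ballI)
      show "min d1 d2 > 0"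
        using d1(1) d2(1) by simp
      fix y w assume y: "pseudotrajectory G S \<Phi> (min d1 d2) y" and w: "w \<in> carrier G"
      have "dist (y (h1 \<otimes> (h2 \<otimes> w))) (\<Phi> h1 (y (h2 \<otimes> w))) < e / 2"
        using d1(2) pseudotrajectory_mono[OF y] h w by simp
      moreover have "dist (\<Phi> h1 (y (h2 \<otimes> w))) (\<Phi> h1 (\<Phi> h2 (y w))) < e / 2"
        using \<delta>(2) d2(2) pseudotrajectory_mono[OF y] w by simp
      ultimately have "dist (y (h1 \<otimes> (h2 \<otimes> w))) (\<Phi> h1 (\<Phi> h2 (y w))) < e"
        using dist_triangle[of "y (h1 \<otimes> (h2 \<otimes> w))" "\<Phi> h1 (\<Phi> h2 (y w))" "\<Phi> h1 (y (h2 \<otimes> w))"]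
        by linarith
      then show "dist (y (h1 \<otimes> h2 \<otimes> w)) (\<Phi> (h1 \<otimes> h2) (y w)) < e"
        using h w by (simp add: m_assoc action_mult)
    qed
  qed
qed

lemma pseudotrajectory_finite_step_bound:
  assumes S: "finite_symmetric_generating G S" and A: "finite A" "A \<subseteq> carrier G" and e: "e > 0"
  shows "\<exists>d>0. \<forall>y. pseudotrajectory G S \<Phi> d y \<longrightarrow>
           (\<forall>a\<in>A. \<forall>w\<in>carrier G. dist (y (a \<otimes> w)) (\<Phi> a (y w)) < e)"
  using A
proof (induction rule: finite_induct)
  case empty
  show ?case by (intro exI[of _ 1]) simp
next
  case (insert a A)
  obtain d1 where d1: "d1 > 0" "\<forall>y. pseudotrajectory G S \<Phi> d1 y \<longrightarrow>
      (\<forall>b\<in>A. \<forall>w\<in>carrier G. dist (y (b \<otimes> w)) (\<Phi> b (y w)) < e)"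
    using insert by auto
  obtain d2 where d2: "d2 > 0" "\<forall>y. pseudotrajectory G S \<Phi> d2 y \<longrightarrow>
      (\<forall>w\<in>carrier G. dist (y (a \<otimes> w)) (\<Phi> a (y w)) < e)"
    using pseudotrajectory_step_bound[OF S _ e, of a] insert.prems by auto
  show ?case
    using d1 d2 pseudotrajectory_mono by (intro exI[of _ "min d1 d2"]) (auto 4 3)
qed

end

section \<open>Shadowing and expansivity inherited from a single element\<close>

context uniform_group_action begin

lemma subgroup_equivariance:
  "subgroup {c \<in> carrier G. \<forall>h\<in>carrier G. \<xi> (c \<otimes> h) = \<Phi> c (\<xi> h)} G"
proof (rule subgroup.intro)
  fix a b
  assume a: "a \<in> {c \<in> carrier G. \<forall>h\<in>carrier G. \<xi> (c \<otimes> h) = \<Phi> c (\<xi> h)}"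
    and b: "b \<in> {c \<in> carrier G. \<forall>h\<in>carrier G. \<xi> (c \<otimes> h) = \<Phi> c (\<xi> h)}"
  then show "a \<otimes> b \<in> {c \<in> carrier G. \<forall>h\<in>carrier G. \<xi> (c \<otimes> h) = \<Phi> c (\<xi> h)}"
    by (simp add: m_assoc action_mult)
  have "\<xi> (inv a \<otimes> h) = \<Phi> (inv a) (\<xi> h)" if h: "h \<in> carrier G" for h
  proof -
    have "\<xi> (a \<otimes> (inv a \<otimes> h)) = \<Phi> a (\<xi> (inv a \<otimes> h))"
      using a h by (simp del: mult_inv_cancel_left)
    moreover have "a \<otimes> (inv a \<otimes> h) = h"
      using a h by simp
    ultimately have "\<xi> h = \<Phi> a (\<xi> (inv a \<otimes> h))"
      by metis
    then show ?thesis
      using a by (simp add: action_mult[symmetric])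
  qed
  then show "inv a \<in> {c \<in> carrier G. \<forall>h\<in>carrier G. \<xi> (c \<otimes> h) = \<Phi> c (\<xi> h)}"
    using a by simp
qed auto

lemma orbit_slice_pseudotrajectory:
  assumes g: "g \<in> carrier G" and h: "h \<in> carrier G"
    and step: "\<And>w. w \<in> carrier G \<Longrightarrow> dist (y (g \<otimes> w)) (\<Phi> g (y w)) < d"
      "\<And>w. w \<in> carrier G \<Longrightarrow> dist (y (inv g \<otimes> w)) (\<Phi> (inv g) (y w)) < d"
  shows "pseudotrajectory integer_group {1, -1} (zpow_fun (\<Phi> g)) d (\<lambda>k. y (g [^] k \<otimes> h))"
  unfolding pseudotrajectory_def
proof (intro ballI)
  fix s k :: int assume s: "s \<in> {1, -1}"
  have gkh: "g [^] k \<otimes> h \<in> carrier G"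
    using g h by simp
  have "g [^] (s + k) \<otimes> h = g [^] s \<otimes> (g [^] k \<otimes> h)"
    using g h by (simp add: int_pow_mult m_assoc)
  moreover have "g [^] s = g \<or> g [^] s = inv g"
    using s g by (auto simp: int_pow_neg)
  ultimately show "dist (y (g [^] (s \<otimes>\<^bsub>integer_group\<^esub> k) \<otimes> h)) (zpow_fun (\<Phi> g) s (y (g [^] k \<otimes> h))) < d"
    using step gkh g by (auto simp: zpow_fun_action integer_group_def)
qed

lemma orbit_slices_shadowed:
  assumes g: "g \<in> carrier G" and shadowing: "shadowing_on integer_group {1, -1} (zpow_fun (\<Phi> g)) V"
    and "\<eta> > 0"
  obtains d where "d > 0"
    "\<And>y h. (\<And>w. w \<in> carrier G \<Longrightarrow> dist (y (g \<otimes> w)) (\<Phi> g (y w)) < d) \<Longrightarrow>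
       (\<And>w. w \<in> carrier G \<Longrightarrow> dist (y (inv g \<otimes> w)) (\<Phi> (inv g) (y w)) < d) \<Longrightarrow>
       (\<And>w. w \<in> carrier G \<Longrightarrow> y w \<in> V) \<Longrightarrow> h \<in> carrier G \<Longrightarrow>
       \<exists>x. \<forall>k::int. dist (y (g [^] k \<otimes> h)) (\<Phi> (g [^] k) x) < \<eta>"
proof -
  obtain d where "d > 0" and d: "\<And>z. pseudotrajectory integer_group {1, -1} (zpow_fun (\<Phi> g)) d z \<Longrightarrow>
      (\<forall>k\<in>carrier integer_group. z k \<in> V) \<Longrightarrow>
      \<exists>x. \<forall>k\<in>carrier integer_group. dist (z k) (zpow_fun (\<Phi> g) k x) < \<eta>"
    using shadowing \<open>\<eta> > 0\<close> unfolding shadowing_on_def by meson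
  show ?thesis
  proof (rule that[OF \<open>d > 0\<close>])
    fix y h
    assume step: "\<And>w. w \<in> carrier G \<Longrightarrow> dist (y (g \<otimes> w)) (\<Phi> g (y w)) < d"
        "\<And>w. w \<in> carrier G \<Longrightarrow> dist (y (inv g \<otimes> w)) (\<Phi> (inv g) (y w)) < d"
      and y_V: "\<And>w. w \<in> carrier G \<Longrightarrow> y w \<in> V" and h: "h \<in> carrier G"
    have "pseudotrajectory integer_group {1, -1} (zpow_fun (\<Phi> g)) d (\<lambda>k. y (g [^] k \<otimes> h))"
      using g h step by (rule orbit_slice_pseudotrajectory)
    then show "\<exists>x. \<forall>k::int. dist (y (g [^] k \<otimes> h)) (\<Phi> (g [^] k) x) < \<eta>"
      using d y_V g h by (simp add: zpow_fun_action)
  qed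
qed

lemma coset_shadowing_error:
  fixes k :: int
  assumes c: "g \<in> carrier G" "a \<in> carrier G" "b \<in> carrier G" "s \<in> carrier G" "h \<in> carrier G"
    and coset: "g [^] k \<otimes> s = a \<otimes> g [^] k \<otimes> b"
    and close: "dist (y (g [^] k \<otimes> (b \<otimes> h))) (\<Phi> (g [^] k) (\<Phi> b x)) < \<eta>"
    and a_cont: "\<And>p q. dist p q < \<eta> \<Longrightarrow> dist (\<Phi> a p) (\<Phi> a q) < e / 2"
    and a_step: "dist (y (a \<otimes> (g [^] k \<otimes> (b \<otimes> h)))) (\<Phi> a (y (g [^] k \<otimes> (b \<otimes> h)))) < e / 2"
  shows "dist (y (g [^] k \<otimes> (s \<otimes> h))) (\<Phi> (g [^] k) (\<Phi> s x)) < e"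
proof -
  define w where "w = g [^] k \<otimes> (b \<otimes> h)"
  have "g [^] k \<otimes> (s \<otimes> h) = (a \<otimes> g [^] k \<otimes> b) \<otimes> h"
    using coset c by (simp add: m_assoc[symmetric])
  then have "g [^] k \<otimes> (s \<otimes> h) = a \<otimes> w"
    using c by (simp add: w_def m_assoc)
  moreover have "\<Phi> (g [^] k) (\<Phi> s x) = \<Phi> a (\<Phi> (g [^] k) (\<Phi> b x))"
  proof -
    have "\<Phi> (g [^] k) (\<Phi> s x) = \<Phi> (g [^] k \<otimes> s) x"
      using c by (simp add: action_mult)
    also have "\<dots> = \<Phi> a (\<Phi> (g [^] k) (\<Phi> b x))"
      using c by (simp add: coset action_mult)
    finally show ?thesis .
  qed
  moreover have "dist (\<Phi> a (y w)) (\<Phi> a (\<Phi> (g [^] k) (\<Phi> b x))) < e / 2"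
    using a_cont close by (simp add: w_def)
  ultimately show ?thesis
    using a_step dist_triangle[of "y (a \<otimes> w)" "\<Phi> a (\<Phi> (g [^] k) (\<Phi> b x))" "\<Phi> a (y w)"]
    by (simp add: w_def)
qed

lemma shadowing_from_orbit_slices:
  assumes g: "g \<in> carrier G" and A: "A \<subseteq> carrier G"
    and A_closed: "\<And>K. subgroup K G \<Longrightarrow> power_coset_closed G g A K \<Longrightarrow> carrier G \<subseteq> K"
    and slice_shadowed: "\<And>h. h \<in> carrier G \<Longrightarrow> \<exists>x. \<forall>k::int. dist (y (g [^] k \<otimes> h)) (\<Phi> (g [^] k) x) < \<eta>"
    and slice_unique: "\<And>h p q. h \<in> carrier G \<Longrightarrow>
       (\<And>k::int. dist (y (g [^] k \<otimes> h)) (\<Phi> (g [^] k) p) < e) \<Longrightarrow>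
       (\<And>k::int. dist (y (g [^] k \<otimes> h)) (\<Phi> (g [^] k) q) < e) \<Longrightarrow> p = q"
    and "\<eta> \<le> e"
    and A_cont: "\<And>a p q. a \<in> A \<Longrightarrow> dist p q < \<eta> \<Longrightarrow> dist (\<Phi> a p) (\<Phi> a q) < e / 2"
    and A_step: "\<And>a w. a \<in> A \<Longrightarrow> w \<in> carrier G \<Longrightarrow> dist (y (a \<otimes> w)) (\<Phi> a (y w)) < e / 2"
  shows "\<exists>x. \<forall>h\<in>carrier G. dist (y h) (\<Phi> h x) < \<eta>"
proof -
  define \<xi> where "\<xi> h = (SOME x. \<forall>k::int. dist (y (g [^] k \<otimes> h)) (\<Phi> (g [^] k) x) < \<eta>)" for h
  have \<xi>: "dist (y (g [^] k \<otimes> h)) (\<Phi> (g [^] k) (\<xi> h)) < \<eta>" if "h \<in> carrier G" for h and k :: int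
    using someI_ex[OF slice_shadowed[OF that]] by (simp add: \<xi>_def)
  define K where "K = {c \<in> carrier G. \<forall>h\<in>carrier G. \<xi> (c \<otimes> h) = \<Phi> c (\<xi> h)}"
  have "power_coset_closed G g A K"
    unfolding power_coset_closed_def
  proof (intro ballI impI)
    fix s assume s: "s \<in> carrier G"
      and cosets: "\<forall>k::int. \<exists>a\<in>A. \<exists>b\<in>K. g [^] k \<otimes> s = a \<otimes> g [^] k \<otimes> b"
    \<comment> \<open>By uniqueness it suffices that \<open>\<Phi> s (\<xi> h)\<close> shadows the slice through \<open>s h\<close>.\<close>
    have "\<Phi> s (\<xi> h) = \<xi> (s \<otimes> h)" if h: "h \<in> carrier G" for h
    proof (rule slice_unique)
      show sh: "s \<otimes> h \<in> carrier G"
        using s h by simp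
      fix k :: int
      show "dist (y (g [^] k \<otimes> (s \<otimes> h))) (\<Phi> (g [^] k) (\<xi> (s \<otimes> h))) < e"
        using \<xi>[OF sh] \<open>\<eta> \<le> e\<close> by (rule less_le_trans)
      obtain a b where ab: "a \<in> A" "b \<in> K" "g [^] k \<otimes> s = a \<otimes> g [^] k \<otimes> b"
        using cosets by blast
      have c: "a \<in> carrier G" "b \<in> carrier G"
        using ab A by (auto simp: K_def)
      have "\<xi> (b \<otimes> h) = \<Phi> b (\<xi> h)"
        using ab(2) h by (simp add: K_def)
      then show "dist (y (g [^] k \<otimes> (s \<otimes> h))) (\<Phi> (g [^] k) (\<Phi> s (\<xi> h))) < e"
        using coset_shadowing_error[OF g c s h ab(3)] \<xi>[of "b \<otimes> h" k] A_cont[OF ab(1)]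
          A_step[OF ab(1)] c g h by simp
    qed
    then show "s \<in> K"
      using s by (simp add: K_def)
  qed
  then have "carrier G \<subseteq> K"
    using A_closed subgroup_equivariance[of \<xi>] by (simp add: K_def)
  then have equivariant: "\<xi> h = \<Phi> h (\<xi> \<one>)" if "h \<in> carrier G" for h
  proof -
    have "h \<in> K"
      using \<open>carrier G \<subseteq> K\<close> that by blast
    then have "\<xi> (h \<otimes> \<one>) = \<Phi> h (\<xi> \<one>)"
      unfolding K_def by blast
    then show ?thesis
      using that by simp
  qed
  have "dist (y h) (\<Phi> h (\<xi> \<one>)) < \<eta>" if "h \<in> carrier G" for h
    using \<xi>[OF that, of 0] that equivariant[OF that] by simp
  then show ?thesis
    by blast
qed

lemma expansive_on_of_generator:
  assumes g: "g \<in> carrier G" and expansive: "expansive_on integer_group (zpow_fun (\<Phi> g)) U"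
  shows "expansive_on G \<Phi> U"
proof -
  obtain \<Delta> where "\<Delta> > 0" and \<Delta>: "\<forall>x1\<in>U. \<forall>x2\<in>U.
      (\<forall>k::int. \<Phi> (g [^] k) x1 \<in> U \<and> \<Phi> (g [^] k) x2 \<in> U \<and> dist (\<Phi> (g [^] k) x1) (\<Phi> (g [^] k) x2) < \<Delta>)
      \<longrightarrow> x1 = x2"
    using expansive by (auto simp: expansive_on_def zpow_fun_action[OF g])
  then show ?thesis
    unfolding expansive_on_def using g by (intro exI[of _ \<Delta>]) auto
qed

lemma shadowing_on_of_generator:
  assumes vn: "virtually_nilpotent G" and S: "finite_symmetric_generating G S" and g: "g \<in> carrier G"
    and \<gamma>: "\<gamma> > 0" "(\<Union>x\<in>V. ball x \<gamma>) \<subseteq> U"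
    and expansive: "expansive_on integer_group (zpow_fun (\<Phi> g)) U"
    and shadowing: "shadowing_on integer_group {1, -1} (zpow_fun (\<Phi> g)) V"
  shows "shadowing_on G S \<Phi> V"
  unfolding shadowing_on_def
proof (intro allI impI)
  fix \<epsilon> :: real assume "\<epsilon> > 0"
  obtain \<Delta> where "\<Delta> > 0" and \<Delta>: "\<And>V e z p q. (\<Union>x\<in>V. ball x e) \<subseteq> U \<Longrightarrow> 2 * e \<le> \<Delta> \<Longrightarrow>
      (\<And>k. z k \<in> V) \<Longrightarrow> (\<And>k. dist (z k) (zpow_fun (\<Phi> g) k p) < e) \<Longrightarrow>
      (\<And>k. dist (z k) (zpow_fun (\<Phi> g) k q) < e) \<Longrightarrow> p = q"
    using homeo_expansive_shadowing_unique[OF expansive] by blast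
  obtain A where A: "finite A" "A \<subseteq> carrier G"
    "\<And>K. subgroup K G \<Longrightarrow> power_coset_closed G g A K \<Longrightarrow> carrier G \<subseteq> K"
    using virtually_nilpotent_power_coset_closed[OF vn S g] by blast
  define e where "e = min \<epsilon> (min \<gamma> \<Delta>) / 2"
  have e: "e > 0" "e < \<epsilon>" "e \<le> \<gamma>" "2 * e \<le> \<Delta>"
    using \<open>\<epsilon> > 0\<close> \<gamma>(1) \<open>\<Delta> > 0\<close> by (auto simp: e_def)
  obtain \<delta> where "\<delta> > 0" and \<delta>: "\<forall>a\<in>A. \<forall>p q. dist p q < \<delta> \<longrightarrow> dist (\<Phi> a p) (\<Phi> a q) < e / 2"
    using finite_uniformly_equicontinuous[OF A(1,2), of "e / 2"] e(1) by auto
  define \<eta> where "\<eta> = min e \<delta>"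
  have "\<eta> > 0"
    using e(1) \<open>\<delta> > 0\<close> by (simp add: \<eta>_def)
  obtain d\<^sub>g where "d\<^sub>g > 0" and d\<^sub>g: "\<And>y h. (\<And>w. w \<in> carrier G \<Longrightarrow> dist (y (g \<otimes> w)) (\<Phi> g (y w)) < d\<^sub>g) \<Longrightarrow>
      (\<And>w. w \<in> carrier G \<Longrightarrow> dist (y (inv g \<otimes> w)) (\<Phi> (inv g) (y w)) < d\<^sub>g) \<Longrightarrow>
      (\<And>w. w \<in> carrier G \<Longrightarrow> y w \<in> V) \<Longrightarrow> h \<in> carrier G \<Longrightarrow>
      \<exists>x. \<forall>k::int. dist (y (g [^] k \<otimes> h)) (\<Phi> (g [^] k) x) < \<eta>"
    using orbit_slices_shadowed[OF g shadowing \<open>\<eta> > 0\<close>] by blast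
  obtain d where "d > 0" and d: "\<forall>y. pseudotrajectory G S \<Phi> d y \<longrightarrow>
      (\<forall>a\<in>{g, inv g} \<union> A. \<forall>w\<in>carrier G. dist (y (a \<otimes> w)) (\<Phi> a (y w)) < min d\<^sub>g (e / 2))"
    using pseudotrajectory_finite_step_bound[OF S, of "{g, inv g} \<union> A" "min d\<^sub>g (e / 2)"]
      A(1,2) g \<open>d\<^sub>g > 0\<close> e(1) by auto
  have "\<exists>x. \<forall>h\<in>carrier G. dist (y h) (\<Phi> h x) < \<eta>"
    if y: "pseudotrajectory G S \<Phi> d y" and y_V: "\<forall>h\<in>carrier G. y h \<in> V" for y
  proof (rule shadowing_from_orbit_slices[OF g A(2,3)])
    have step: "dist (y (a \<otimes> w)) (\<Phi> a (y w)) < min d\<^sub>g (e / 2)"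
      if "a \<in> {g, inv g} \<union> A" "w \<in> carrier G" for a w
      using d y that by blast
    then show "\<exists>x. \<forall>k::int. dist (y (g [^] k \<otimes> h)) (\<Phi> (g [^] k) x) < \<eta>" if "h \<in> carrier G" for h
      using d\<^sub>g y_V that by simp
    show "dist (y (a \<otimes> w)) (\<Phi> a (y w)) < e / 2" if "a \<in> A" "w \<in> carrier G" for a w
      using step that by fastforce
    show "\<eta> \<le> e"
      by (simp add: \<eta>_def)
    show "dist (\<Phi> a p) (\<Phi> a q) < e / 2" if "a \<in> A" "dist p q < \<eta>" for a p q
      using \<delta> that by (simp add: \<eta>_def)
    fix h p q assume h: "h \<in> carrier G"
      and p: "\<And>k::int. dist (y (g [^] k \<otimes> h)) (\<Phi> (g [^] k) p) < e"
      and q: "\<And>k::int. dist (y (g [^] k \<otimes> h)) (\<Phi> (g [^] k) q) < e"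
    show "p = q"
    proof (rule \<Delta>[where z = "\<lambda>k. y (g [^] k \<otimes> h)"])
      show "(\<Union>x\<in>V. ball x e) \<subseteq> U"
        using \<gamma>(2) subset_ball[OF e(3)] by blast
      show "2 * e \<le> \<Delta>"
        by (rule e(4))
      show "y (g [^] k \<otimes> h) \<in> V" for k :: int
        using y_V g h by simp
      show "dist (y (g [^] k \<otimes> h)) (zpow_fun (\<Phi> g) k p) < e"
        and "dist (y (g [^] k \<otimes> h)) (zpow_fun (\<Phi> g) k q) < e" for k :: int
        using p q g by (simp_all add: zpow_fun_action)
    qed
  qed
  moreover have "\<eta> < \<epsilon>"
    using e(2) by (simp add: \<eta>_def)
  ultimately show "\<exists>d>0. \<forall>y. pseudotrajectory G S \<Phi> d y \<and> (\<forall>h\<in>carrier G. y h \<in> V) \<longrightarrow>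
      (\<exists>x. \<forall>h\<in>carrier G. dist (y h) (\<Phi> h x) < \<epsilon>)"
    using \<open>d > 0\<close> by (meson less_trans)
qed

end

theorem theorem1:
  fixes G :: "('g, 'm) monoid_scheme"
    and S :: "'g set"
    and \<Phi> :: "'g \<Rightarrow> 'b::metric_space \<Rightarrow> 'b"
    and U V :: "'b set"
    and g :: 'g
  assumes "group G"
    and "finitely_generated_group G"
    and "virtually_nilpotent G"
    and "uniformly_continuous_action G \<Phi>"
    and "finite_symmetric_generating G S"
    and "g \<in> carrier G"
    and "homeo_topologically_anosov (\<Phi> g) U V"
  shows "topologically_anosov G S \<Phi> U V"
  \<comment> \<open>\<open>finitely_generated_group G\<close> is implied by the generating set \<open>S\<close> and not needed.\<close>
proof -
  interpret uniform_group_action G \<Phi>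
    using assms(1,4) by (rule uniform_group_action.intro[OF _ uniform_group_action_axioms.intro])
  obtain \<gamma> where \<gamma>: "\<gamma> > 0" "(\<Union>x\<in>V. ball x \<gamma>) \<subseteq> U"
    and shadowing: "shadowing_on integer_group {1, -1} (zpow_fun (\<Phi> g)) V"
    and expansive: "expansive_on integer_group (zpow_fun (\<Phi> g)) U"
    using assms(7) by (auto simp: homeo_topologically_anosov_def topologically_anosov_def)
  show ?thesis
    unfolding topologically_anosov_def
    using \<gamma> shadowing_on_of_generator[OF assms(3,5,6) \<gamma> expansive shadowing]
      expansive_on_of_generator[OF assms(6) expansive] by blast
qed

end
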